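(* Let $s_\varepsilon$ and $s$ be as defined below. Then $s_\varepsilon\to s$ as $\varepsilon\to0$, uniformly on compact subsets of $\mathbb{R}^4$.
   Context: Strict delta net: a net $(\delta_\varepsilon)_{\varepsilon\in(0,1]}$ of smooth compactly supported functions on $\mathbb{R}$ with $\operatorname{supp}\delta_\varepsilon\subseteq[-\varepsilon,\varepsilon]$, $\int\delta_\varepsilon\to1$ as $\varepsilon\to0$, and $\int|\delta_\varepsilon|\le C$ for some $C>0$ and small $\varepsilon$. Fix $f\in C^\infty(\mathbb{R}^2,\mathbb{R})$ and a strict delta net $(\delta_\varepsilon)_\varepsilon$; write $X=(X^1,X^2)$. Let $(x_\varepsilon)_\varepsilon=(x_\varepsilon^1,x_\varepsilon^2)_\varepsilon\in C^\infty(\mathbb{R}^2\times\mathbb{R},\mathbb{R}^2)^{(0,1]}$ be a fixed net such that for every compact $K\subseteq\mathbb{R}^2$ there is $\varepsilon_K$ such that for all $X\in K$ and $\varepsilon\le\varepsilon_K$, $U\mapsto x_\varepsilon(X,U)$ is the solution on all of $\mathbb{R}$ of $\partial_U^2x_\varepsilon^i(X,U)=\frac12\partial_if(x_\varepsilon(X,U))\,\delta_\varepsilon(U)$, $x_\varepsilon^i(X,-1)=X^i$, $\partial_Ux_\varepsilon^i(X,-1)=0$ ($i=1,2$). Write $\dot x_\varepsilon^i=\partial_U x_\varepsilon^i$ and define $$w_\varepsilon(X,V,U)=V+\int_{-\varepsilon}^U\int_{-\varepsilon}^s\sum_{i=1}^2\partial_if(x_\varepsilon(X,r))\,\dot x_\varepsilon^i(X,r)\,\delta_\varepsilon(r)\,dr\,ds,$$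 $s_\varepsilon(U,X^1,X^2,V)=(U,x_\varepsilon^1(X,U),x_\varepsilon^2(X,U),w_\varepsilon(X,V,U))$. With $U_+=\max(U,0)$, let $x^i(X,U)=X^i+\frac12\partial_if(X)U_+$, $w(X,V,U)=V+\frac14\sum_{i=1}^2(\partial_if(X))^2U_+$ and $s(U,X^1,X^2,V)=(U,x^1(X,U),x^2(X,U),w(X,V,U))$. *)

theory Defs
  imports "HOL-Analysis.Analysis"
begin

coinductive smooth :: "('a::euclidean_space \<Rightarrow> 'b::real_normed_vector) \<Rightarrow> bool" where
  "(\<forall>x. g differentiable (at x)) \<Longrightarrow>
   (\<forall>b\<in>Basis. smooth (\<lambda>x. frechet_derivative g (at x) b)) \<Longrightarrow> smooth g"

definition partial1 :: "(real \<times> real \<Rightarrow> real) \<Rightarrow> real \<times> real \<Rightarrow> real" where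
  "partial1 f p = deriv (\<lambda>t. f (t, snd p)) (fst p)"

definition partial2 :: "(real \<times> real \<Rightarrow> real) \<Rightarrow> real \<times> real \<Rightarrow> real" where
  "partial2 f p = deriv (\<lambda>t. f (fst p, t)) (snd p)"

definition oint :: "real \<Rightarrow> real \<Rightarrow> (real \<Rightarrow> real) \<Rightarrow> real" where
  "oint a b g = (if a \<le> b then integral {a..b} g else - integral {b..a} g)"

definition strict_delta_net :: "(real \<Rightarrow> real \<Rightarrow> real) \<Rightarrow> bool" where
  "strict_delta_net \<delta> \<longleftrightarrow>
     (\<forall>\<epsilon>\<in>{0<..1}. smooth (\<delta> \<epsilon>) \<and> (\<forall>u. \<delta> \<epsilon> u \<noteq> 0 \<longrightarrow> u \<in> {-\<epsilon>..\<epsilon>})) \<and>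
     ((\<lambda>\<epsilon>. integral {-\<epsilon>..\<epsilon>} (\<delta> \<epsilon>)) \<longlongrightarrow> 1) (at_right 0) \<and>
     (\<exists>C>0. \<forall>\<^sub>F \<epsilon> in at_right 0. integral {-\<epsilon>..\<epsilon>} (\<lambda>u. \<bar>\<delta> \<epsilon> u\<bar>) \<le> C)"

definition w_eps :: "(real \<times> real \<Rightarrow> real) \<Rightarrow> (real \<Rightarrow> real \<Rightarrow> real)
    \<Rightarrow> (real \<Rightarrow> real \<times> real \<Rightarrow> real \<Rightarrow> real \<times> real) \<Rightarrow> real \<Rightarrow> real \<times> real \<Rightarrow> real \<Rightarrow> real \<Rightarrow> real" where
  "w_eps f \<delta> x \<epsilon> X V U = V + oint (-\<epsilon>) U (\<lambda>s. oint (-\<epsilon>) s (\<lambda>r.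
      (partial1 f (x \<epsilon> X r) * fst (vector_derivative (x \<epsilon> X) (at r))
     + partial2 f (x \<epsilon> X r) * snd (vector_derivative (x \<epsilon> X) (at r))) * \<delta> \<epsilon> r))"

definition s_eps :: "(real \<times> real \<Rightarrow> real) \<Rightarrow> (real \<Rightarrow> real \<Rightarrow> real)
    \<Rightarrow> (real \<Rightarrow> real \<times> real \<Rightarrow> real \<Rightarrow> real \<times> real) \<Rightarrow> real
    \<Rightarrow> real \<times> real \<times> real \<times> real \<Rightarrow> real \<times> real \<times> real \<times> real" where
  "s_eps f \<delta> x \<epsilon> p = (case p of (U, X1, X2, V) \<Rightarrow>
      (U, fst (x \<epsilon> (X1, X2) U), snd (x \<epsilon> (X1, X2) U), w_eps f \<delta> x \<epsilon> (X1, X2) V U))"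

definition s_lim :: "(real \<times> real \<Rightarrow> real)
    \<Rightarrow> real \<times> real \<times> real \<times> real \<Rightarrow> real \<times> real \<times> real \<times> real" where
  "s_lim f p = (case p of (U, X1, X2, V) \<Rightarrow>
      (U, X1 + 1/2 * partial1 f (X1, X2) * max U 0,
          X2 + 1/2 * partial2 f (X1, X2) * max U 0,
          V + 1/4 * ((partial1 f (X1, X2))\<^sup>2 + (partial2 f (X1, X2))\<^sup>2) * max U 0))"

end

theory Submission
  imports Defs
begin

(*
  Write g = grad f and h = g(X)/2.  For small eps the solution x_eps of
  x'' = (delta_eps/2) g(x), x(-1) = X, x'(-1) = 0 is constant (= X) before -eps, moves by
  O(eps) inside [-eps, eps] (a continuity/bootstrap argument keeps it in the unit ball around X,
  where g is bounded), and is affine afterwards with velocity x'(eps).  That velocity is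
  (integral of delta_eps)/2 * g(X) up to the oscillation of g on an O(eps)-ball, hence tends
  to h.  The work integral in w_eps equals |x'|^2 (a fundamental-theorem-of-calculus identity),
  so it is 0 before -eps, bounded inside, and |x'(eps)|^2 afterwards; integrating once more
  gives |h|^2 U_+ up to O(eps) + |U| * O(|x'(eps) - h|).

  Compactness (a uniform bound and modulus of continuity for g near the
  initial points) makes these uniform for small eps (kick_error_eventually).
*)

section \<open>Smooth functions and their gradient\<close>

lemma smooth_imp_continuous: "smooth h \<Longrightarrow> continuous_on UNIV h"
  by (erule smooth.cases) (metis differentiable_imp_continuous_on differentiable_on_def)

lemma deriv_along_curve:
  fixes f :: "'a::real_normed_vector \<Rightarrow> real"
  assumes \<gamma>: "(\<gamma> has_vector_derivative v) (at t)" and f: "f differentiable (at (\<gamma> t))"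
  shows "deriv (\<lambda>s. f (\<gamma> s)) t = frechet_derivative f (at (\<gamma> t)) v"
proof -
  let ?D = "frechet_derivative f (at (\<gamma> t))"
  have fD: "(f has_derivative ?D) (at (\<gamma> t))" using f frechet_derivative_works by blast
  have "((\<lambda>s. f (\<gamma> s)) has_derivative (\<lambda>h. ?D (h *\<^sub>R v))) (at t)"
    using has_derivative_compose[OF \<gamma>[unfolded has_vector_derivative_def] fD] .
  moreover have "(\<lambda>h. ?D (h *\<^sub>R v)) = (\<lambda>h. h * ?D v)"
    using linear_scale[OF has_derivative_linear[OF fD]] by auto
  ultimately have "((\<lambda>s. f (\<gamma> s)) has_field_derivative ?D v) (at t)"
    by (simp add: has_field_derivative_def mult.commute[of _ "?D v"])
  thus ?thesis by (rule DERIV_imp_deriv)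
qed

definition grad :: "(real \<times> real \<Rightarrow> real) \<Rightarrow> real \<times> real \<Rightarrow> real \<times> real" where
  "grad f y = (partial1 f y, partial2 f y)"

text \<open>The gradient of a smooth function is continuous, since its components are the
  (smooth, hence continuous) Frechet derivatives along the basis vectors.\<close>
lemma smooth_grad_continuous:
  assumes "smooth f"
  shows "continuous_on UNIV (grad f)"
proof -
  from assms have d: "\<And>y. f differentiable (at y)"
    and s: "\<forall>b\<in>Basis. smooth (\<lambda>y. frechet_derivative f (at y) b)"
    by (auto elim: smooth.cases)
  have "partial1 f y = frechet_derivative f (at y) (1, 0)" for y
    unfolding partial1_def
    using deriv_along_curve[of "\<lambda>t. (t, snd y)" "(1, 0)" "fst y" f] d
    by (simp add: has_vector_derivative_def has_derivative_Pair has_derivative_ident)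
  moreover have "partial2 f y = frechet_derivative f (at y) (0, 1)" for y
    unfolding partial2_def
    using deriv_along_curve[of "\<lambda>t. (fst y, t)" "(0, 1)" "snd y" f] d
    by (simp add: has_vector_derivative_def has_derivative_Pair has_derivative_ident)
  moreover have "smooth (\<lambda>y. frechet_derivative f (at y) (1, 0))"
    and "smooth (\<lambda>y. frechet_derivative f (at y) (0, 1))"
    using s by (auto simp: Basis_prod_def)
  ultimately show ?thesis
    unfolding grad_def by (simp add: continuous_on_Pair smooth_imp_continuous)
qed

section \<open>One-dimensional calculus\<close>

lemma vector_derivative_zero_const:
  fixes h :: "real \<Rightarrow> 'b::real_normed_vector"
  assumes "convex S" "\<And>u. u \<in> S \<Longrightarrow> (h has_vector_derivative 0) (at u)" "a \<in> S" "b \<in> S"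
  shows "h a = h b"
  using has_vector_derivative_zero_constant[OF assms(1)] assms(2-4)
  by (metis has_vector_derivative_at_within)

lemma oint_ftc:
  fixes Q q :: "real \<Rightarrow> real"
  assumes "\<And>r. (Q has_real_derivative q r) (at r)"
  shows "oint a b q = Q b - Q a"
proof -
  have ftc: "(q has_integral (Q v - Q u)) {u..v}" if "u \<le> v" for u v
    by (rule fundamental_theorem_of_calculus[OF that])
       (use assms in \<open>auto simp: has_real_derivative_iff_has_vector_derivative[symmetric]
          intro: has_field_derivative_at_within\<close>)
  show ?thesis
  proof (cases "a \<le> b")
    case True
    thus ?thesis using integral_unique[OF ftc[OF True]] unfolding oint_def by simp
  next
    case False
    hence "b \<le> a" by simp
    from integral_unique[OF ftc[OF this]] False show ?thesis unfolding oint_def by simp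
  qed
qed

text \<open>A bounded continuous function that vanishes left of -e and equals c right of e has
  oriented primitive from -e close to the ramp c * U_+; this is the mechanism turning the
  regularised kick into the jump in the limit.\<close>
lemma oint_ramp_estimate:
  fixes Q :: "real \<Rightarrow> real"
  assumes cQ: "continuous_on UNIV Q" and e: "0 < e"
    and left: "\<And>s. s \<le> -e \<Longrightarrow> Q s = 0" and right: "\<And>s. e \<le> s \<Longrightarrow> Q s = c"
    and R: "\<And>s. \<bar>Q s\<bar> \<le> R"
  shows "\<bar>oint (-e) U Q - c * max U 0\<bar> \<le> 2 * e * R + e * \<bar>c\<bar>"
proof -
  have R0: "0 \<le> R" using R[of 0] by linarith
  have cR: "\<bar>c\<bar> \<le> R" using R[of e] right[of e] by simp
  consider "U \<le> -e" | "-e < U" "U \<le> e" | "e < U" by linarith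
  then show ?thesis
  proof cases
    case 1
    have "integral {U..-e} Q = integral {U..-e} (\<lambda>_. 0)"
      by (rule integral_cong) (use left in auto)
    hence "oint (-e) U Q = 0" using 1 unfolding oint_def by auto
    thus ?thesis using 1 e R0 by simp
  next
    case 2
    have "\<bar>integral {-e..U} Q\<bar> \<le> R * (U - -e)"
      using integral_bound[of "-e" U Q R] continuous_on_subset[OF cQ] R 2 by simp
    also have "\<dots> \<le> R * (2 * e)" using 2 R0 by (intro mult_left_mono) auto
    finally have "\<bar>oint (-e) U Q\<bar> \<le> 2 * e * R" using 2 unfolding oint_def by (simp add: mult_ac)
    moreover have "\<bar>c * max U 0\<bar> \<le> \<bar>c\<bar> * e" using 2 e
      by (simp add: abs_mult) (intro mult_left_mono, auto)
    ultimately show ?thesis by (simp add: mult.commute)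
  next
    case 3
    have "integral {-e..e} Q + integral {e..U} Q = integral {-e..U} Q"
      by (intro Henstock_Kurzweil_Integration.integral_combine
          integrable_continuous_interval continuous_on_subset[OF cQ]) (use 3 e in auto)
    moreover have "integral {e..U} Q = integral {e..U} (\<lambda>_. c)"
      by (rule integral_cong) (use right in auto)
    moreover have "integral {e..U} (\<lambda>_. c) = (U - e) * c" using 3 by (simp add: content_real)
    ultimately have "oint (-e) U Q - c * max U 0 = integral {-e..e} Q - e * c"
      using 3 e unfolding oint_def by (simp add: algebra_simps)
    moreover have "\<bar>integral {-e..e} Q\<bar> \<le> R * (e - -e)"
      using integral_bound[of "-e" e Q R] continuous_on_subset[OF cQ] R e by simp
    moreover have "\<bar>e * c\<bar> = e * \<bar>c\<bar>" using e by (simp add: abs_mult)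
    ultimately show ?thesis by (simp add: algebra_simps)
  qed
qed

section \<open>The regularised kick for one initial point\<close>

text \<open>The ODE x'' = (d/2) g(x), x(-1) = X, x'(-1) = 0, with xd the velocity.  For
  d = delta_eps and g = grad f this is the system defining x_eps.\<close>
definition kick_solution :: "(real \<Rightarrow> real \<times> real) \<Rightarrow> (real \<Rightarrow> real \<times> real) \<Rightarrow> (real \<Rightarrow> real)
    \<Rightarrow> (real \<times> real \<Rightarrow> real \<times> real) \<Rightarrow> real \<times> real \<Rightarrow> bool" where
  "kick_solution x xd d g X \<longleftrightarrow>
     (\<forall>U. (x has_vector_derivative xd U) (at U)) \<and>
     (\<forall>U. (xd has_vector_derivative (d U / 2) *\<^sub>R g (x U)) (at U)) \<and>
     x (-1) = X \<and> xd (-1) = 0"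

text \<open>The work integral appearing in w_eps, written with the velocity xd.\<close>
definition kick_work :: "(real \<Rightarrow> real \<times> real) \<Rightarrow> (real \<Rightarrow> real \<times> real) \<Rightarrow> (real \<Rightarrow> real)
    \<Rightarrow> (real \<times> real \<Rightarrow> real \<times> real) \<Rightarrow> real \<Rightarrow> real \<Rightarrow> real" where
  "kick_work x xd d g e U = oint (-e) U (\<lambda>s. oint (-e) s (\<lambda>r. (g (x r) \<bullet> xd r) * d r))"

definition kick_error :: "(real \<Rightarrow> real \<times> real) \<Rightarrow> (real \<Rightarrow> real \<times> real) \<Rightarrow> (real \<Rightarrow> real)
    \<Rightarrow> (real \<times> real \<Rightarrow> real \<times> real) \<Rightarrow> real \<times> real \<Rightarrow> real \<Rightarrow> real \<Rightarrow> real" where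
  "kick_error x xd d g X e U =
     norm (x U - (X + max U 0 *\<^sub>R ((1/2) *\<^sub>R g X)))
     + \<bar>kick_work x xd d g e U - (norm ((1/2) *\<^sub>R g X))\<^sup>2 * max U 0\<bar>"

locale kick =
  fixes x xd :: "real \<Rightarrow> real \<times> real" and d :: "real \<Rightarrow> real"
    and g :: "real \<times> real \<Rightarrow> real \<times> real" and X :: "real \<times> real" and e M C :: real
  assumes sol: "kick_solution x xd d g X"
    and epos: "0 < e" and ele: "e \<le> 1"
    and dsupp: "\<And>u. d u \<noteq> 0 \<Longrightarrow> u \<in> {-e..e}"
    and dcont: "continuous_on UNIV d"
    and gcont: "continuous_on UNIV g"
    and gM: "\<And>y. dist y X \<le> 1 \<Longrightarrow> norm (g y) \<le> M"
    and dC: "integral {-e..e} (\<lambda>u. \<bar>d u\<bar>) \<le> C"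
    and small: "e * M * C < 1"
begin

lemma xder: "(x has_vector_derivative xd U) (at U)"
  and xdder: "(xd has_vector_derivative (d U / 2) *\<^sub>R g (x U)) (at U)"
  and x0: "x (-1) = X" and xd0: "xd (-1) = 0"
  using sol unfolding kick_solution_def by auto

text \<open>B bounds the velocity; it is the total impulse M C / 2 the kick can impart.\<close>
definition "B = M * C / 2"

lemma x_continuous: "continuous_on UNIV x"
  using xder by (meson continuous_at_imp_continuous_on has_vector_derivative_continuous)

lemma xd_continuous: "continuous_on UNIV xd"
  using xdder by (meson continuous_at_imp_continuous_on has_vector_derivative_continuous)

lemma force_continuous: "continuous_on UNIV (\<lambda>t. (d t / 2) *\<^sub>R g (x t))"
  by (intro continuous_intros dcont continuous_on_compose2[OF gcont x_continuous]) auto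

lemma abs_d_integrable: "(\<lambda>u. \<bar>d u\<bar>) integrable_on {a..b}"
  by (intro integrable_continuous_interval continuous_intros continuous_on_subset[OF dcont]) auto

lemma M_nonneg: "0 \<le> M"
proof -
  have "norm (g X) \<le> M" using gM by simp
  thus ?thesis by (meson norm_ge_zero order_trans)
qed

lemma C_nonneg: "0 \<le> C"
proof -
  have "0 \<le> integral {-e..e} (\<lambda>u. \<bar>d u\<bar>)"
    by (rule integral_nonneg[OF abs_d_integrable]) simp
  thus ?thesis using dC by linarith
qed

lemma B_nonneg: "0 \<le> B"
  unfolding B_def using M_nonneg C_nonneg by simp

text \<open>Outside the open interval (-e, e) the driving term vanishes (by continuity).\<close>
lemma d_outside: "u \<le> -e \<or> e \<le> u \<Longrightarrow> d u = 0"
proof -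
  have cl: "closed {u. d u = 0}"
    using continuous_closed_preimage_constant[OF dcont, of 0] by simp
  have "{..<-e} \<subseteq> {u. d u = 0}" "{e<..} \<subseteq> {u. d u = 0}" using dsupp by force+
  hence "closure {..<-e} \<subseteq> {u. d u = 0}" "closure {e<..} \<subseteq> {u. d u = 0}"
    using closure_minimal cl by blast+
  moreover assume "u \<le> -e \<or> e \<le> u"
  ultimately show "d u = 0" by auto
qed

lemma xd_left: "s \<le> -e \<Longrightarrow> xd s = 0"
proof -
  assume s: "s \<le> -e"
  have "xd s = xd (-1)"
  proof (rule vector_derivative_zero_const[of "{..-e}"])
    fix u assume "u \<in> {..-e}"
    thus "(xd has_vector_derivative 0) (at u)" using xdder[of u] d_outside[of u] by simp
  qed (use ele s in auto)
  thus ?thesis using xd0 by simp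
qed

lemma xd_right: "e \<le> s \<Longrightarrow> xd s = xd e"
proof (rule vector_derivative_zero_const[of "{e..}"])
  fix u assume "u \<in> {e..}"
  thus "(xd has_vector_derivative 0) (at u)" using xdder[of u] d_outside[of u] by simp
qed auto

lemma x_left: "s \<le> -e \<Longrightarrow> x s = X"
proof -
  assume s: "s \<le> -e"
  have "x s = x (-1)"
  proof (rule vector_derivative_zero_const[of "{..-e}"])
    fix u assume "u \<in> {..-e}"
    thus "(x has_vector_derivative 0) (at u)" using xder[of u] xd_left[of u] by simp
  qed (use ele s in auto)
  thus ?thesis using x0 by simp
qed

lemma x_right: "e \<le> s \<Longrightarrow> x s = x e + (s - e) *\<^sub>R xd e"
proof -
  assume s: "e \<le> s"
  have "(\<lambda>t. x t - t *\<^sub>R xd e) s = (\<lambda>t. x t - t *\<^sub>R xd e) e"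
  proof (rule vector_derivative_zero_const[of "{e..}"])
    fix u assume "u \<in> {e..}"
    have "((\<lambda>t. x t - t *\<^sub>R xd e) has_vector_derivative (xd u - (u *\<^sub>R 0 + 1 *\<^sub>R xd e))) (at u)"
      by (rule has_vector_derivative_diff[OF xder
            has_vector_derivative_scaleR[OF DERIV_ident has_vector_derivative_const]])
    thus "((\<lambda>t. x t - t *\<^sub>R xd e) has_vector_derivative 0) (at u)"
      using xd_right[of u] \<open>u \<in> {e..}\<close> by simp
  qed (use s in auto)
  thus ?thesis by (simp add: algebra_simps)
qed

lemma xd_integral: "a \<le> b \<Longrightarrow> ((\<lambda>t. (d t / 2) *\<^sub>R g (x t)) has_integral (xd b - xd a)) {a..b}"
  by (rule fundamental_theorem_of_calculus) (auto intro: has_vector_derivative_at_within xdder)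

lemma x_integral: "a \<le> b \<Longrightarrow> (xd has_integral (x b - x a)) {a..b}"
  by (rule fundamental_theorem_of_calculus) (auto intro: has_vector_derivative_at_within xder)

lemma xd_bound_while_near:
  assumes near: "\<forall>t\<in>{-e..s}. dist (x t) X \<le> 1" and s: "-e \<le> s" "s \<le> e"
  shows "norm (xd s) \<le> B"
proof -
  have "xd s = integral {-e..s} (\<lambda>t. (d t / 2) *\<^sub>R g (x t))"
    using xd_integral[of "-e" s] xd_left[of "-e"] s by (simp add: integral_unique)
  also have "norm \<dots> \<le> integral {-e..s} (\<lambda>t. M / 2 * \<bar>d t\<bar>)"
  proof (rule integral_norm_bound_integral)
    show "(\<lambda>t. (d t / 2) *\<^sub>R g (x t)) integrable_on {-e..s}"
      by (intro integrable_continuous_interval continuous_on_subset[OF force_continuous]) auto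
    show "(\<lambda>t. M / 2 * \<bar>d t\<bar>) integrable_on {-e..s}"
      by (rule integrable_on_mult_right[OF abs_d_integrable])
    fix t assume "t \<in> {-e..s}"
    hence "norm (g (x t)) \<le> M" using near gM by blast
    hence "\<bar>d t\<bar> / 2 * norm (g (x t)) \<le> \<bar>d t\<bar> / 2 * M" by (intro mult_left_mono) auto
    thus "norm ((d t / 2) *\<^sub>R g (x t)) \<le> M / 2 * \<bar>d t\<bar>" by (simp add: field_simps)
  qed
  also have "\<dots> = M / 2 * integral {-e..s} (\<lambda>t. \<bar>d t\<bar>)" by simp
  also have "\<dots> \<le> M / 2 * integral {-e..e} (\<lambda>t. \<bar>d t\<bar>)"
    by (intro mult_left_mono integral_subset_le) (use s M_nonneg abs_d_integrable in auto)
  also have "\<dots> \<le> M / 2 * C" using dC M_nonneg by (intro mult_left_mono) auto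
  finally show ?thesis unfolding B_def by simp
qed

lemma x_displacement_while_near:
  assumes near: "\<forall>t\<in>{-e..s}. dist (x t) X \<le> 1" and s: "-e \<le> s" "s \<le> e"
  shows "norm (x s - X) \<le> B * (s + e)"
proof -
  have "(xd has_integral (x s - X)) (cbox (-e) s)"
    using x_integral[of "-e" s] x_left[of "-e"] s by simp
  moreover have "norm (xd t) \<le> B" if "t \<in> cbox (-e) s" for t
    using xd_bound_while_near[of t] near that s by auto
  ultimately have "norm (x s - X) \<le> B * measure lborel (cbox (-e) s)"
    using has_integral_bound[OF B_nonneg] by blast
  thus ?thesis using s by (simp add: content_real)
qed

text \<open>Bootstrap: the trajectory never leaves the unit ball around X during the kick.  At the
  first exit time t0 the displacement would be at most B (t0 + e) \<le> e M C < 1.\<close>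
lemma stays_near: "\<forall>t\<in>{-e..e}. dist (x t) X \<le> 1"
proof (rule ccontr)
  assume "\<not> ?thesis"
  then obtain t1 where t1: "t1 \<in> {-e..e}" "\<not> dist (x t1) X \<le> 1" by blast
  define S where "S = {-e..e} \<inter> {t. 1 \<le> dist (x t) X}"
  have "closed S" unfolding S_def
    by (intro closed_Int closed_real_atLeastAtMost closed_Collect_le continuous_intros
        continuous_on_subset[OF x_continuous]) auto
  moreover have "S \<noteq> {}" using t1 unfolding S_def by auto
  moreover have bdd: "bdd_below S" unfolding S_def by (rule bdd_belowI[of _ "-e"]) auto
  ultimately have "Inf S \<in> S" by (rule closed_contains_Inf[rotated -1])
  define t0 where "t0 = Inf S"
  have t0S: "t0 \<in> S" using \<open>Inf S \<in> S\<close> unfolding t0_def .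
  have t0e: "-e \<le> t0" "t0 \<le> e" using t0S unfolding S_def by auto
  have before: "dist (x t) X \<le> 1" if "t \<in> {-e..<t0}" for t
    using cInf_lower[OF _ bdd, of t] that t0e unfolding S_def t0_def by force
  have "-e \<notin> S" using x_left[of "-e"] unfolding S_def by simp
  hence t0gt: "-e < t0" using t0S t0e by (cases "t0 = -e") auto
  have "isCont x t0" using x_continuous by (simp add: continuous_on_eq_continuous_at)
  moreover have "0 < 1 - e * M * C" using small by simp
  ultimately obtain r where r: "r > 0" "\<And>t. dist t t0 < r \<Longrightarrow> dist (x t) (x t0) < 1 - e * M * C"
    unfolding continuous_at_eps_delta by blast
  define \<tau> where "\<tau> = max (-e) (t0 - r / 2)"
  have tau: "-e \<le> \<tau>" "\<tau> < t0" "\<tau> \<le> e" "dist \<tau> t0 < r"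
    using t0gt t0e r(1) unfolding \<tau>_def dist_real_def by auto
  have "norm (x \<tau> - X) \<le> B * (\<tau> + e)"
    using x_displacement_while_near[of \<tau>] before tau by fastforce
  also have "\<dots> \<le> B * (2 * e)" using tau B_nonneg by (intro mult_left_mono) auto
  finally have "dist (x \<tau>) X \<le> e * M * C" by (simp add: dist_norm B_def mult_ac)
  moreover have "dist (x t0) (x \<tau>) < 1 - e * M * C" using r(2)[OF tau(4)] by (simp add: dist_commute)
  ultimately have "dist (x t0) X < 1" using dist_triangle[of "x t0" X "x \<tau>"] by linarith
  thus False using t0S unfolding S_def t0_def by auto
qed

lemma xd_bound: "norm (xd s) \<le> B"
proof -
  consider "s \<le> -e" | "-e \<le> s" "s \<le> e" | "e \<le> s" by linarith
  thus ?thesis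
  proof cases
    case 1 thus ?thesis using xd_left B_nonneg by simp
  next
    case 2 thus ?thesis using xd_bound_while_near stays_near by auto
  next
    case 3
    have "norm (xd e) \<le> B" using xd_bound_while_near[of e] stays_near epos by auto
    thus ?thesis using xd_right[OF 3] by simp
  qed
qed

lemma x_displacement:
  assumes t: "t \<in> {-e..e}" shows "norm (x t - X) \<le> 2 * e * B"
proof -
  have "norm (x t - X) \<le> B * (t + e)"
    using x_displacement_while_near[of t] stays_near t by auto
  also have "\<dots> \<le> B * (2 * e)" using t B_nonneg by (intro mult_left_mono) auto
  finally show ?thesis by (simp add: mult_ac)
qed

lemma velocity_after_kick:
  assumes modulus: "\<And>y. dist y X \<le> 2 * e * B \<Longrightarrow> norm (g y - g X) \<le> \<eta>"
  shows "norm (xd e - (integral {-e..e} d / 2) *\<^sub>R g X) \<le> \<eta> / 2 * C"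
proof -
  have \<eta>0: "0 \<le> \<eta>" using modulus[of X] B_nonneg epos by simp
  have "((\<lambda>t. (d t / 2) *\<^sub>R g X) has_integral ((integral {-e..e} d / 2) *\<^sub>R g X)) {-e..e}"
    by (intro has_integral_scaleR_left has_integral_divide integrable_integral
        integrable_continuous_interval continuous_on_subset[OF dcont]) auto
  from has_integral_diff[OF xd_integral this] epos xd_left[of "-e"]
  have kick_integral: "((\<lambda>t. (d t / 2) *\<^sub>R (g (x t) - g X)) has_integral
      (xd e - (integral {-e..e} d / 2) *\<^sub>R g X)) {-e..e}"
    by (simp add: scaleR_diff_right)
  hence "norm (xd e - (integral {-e..e} d / 2) *\<^sub>R g X)
      = norm (integral {-e..e} (\<lambda>t. (d t / 2) *\<^sub>R (g (x t) - g X)))"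
    by (simp add: integral_unique)
  also have "\<dots> \<le> integral {-e..e} (\<lambda>t. \<eta> / 2 * \<bar>d t\<bar>)"
  proof (rule integral_norm_bound_integral)
    show "(\<lambda>t. (d t / 2) *\<^sub>R (g (x t) - g X)) integrable_on {-e..e}"
      using kick_integral by blast
    show "(\<lambda>t. \<eta> / 2 * \<bar>d t\<bar>) integrable_on {-e..e}"
      by (rule integrable_on_mult_right[OF abs_d_integrable])
    fix t assume "t \<in> {-e..e}"
    hence "norm (g (x t) - g X) \<le> \<eta>"
      using modulus x_displacement by (simp add: dist_norm)
    hence "\<bar>d t\<bar> / 2 * norm (g (x t) - g X) \<le> \<bar>d t\<bar> / 2 * \<eta>" by (intro mult_left_mono) auto
    thus "norm ((d t / 2) *\<^sub>R (g (x t) - g X)) \<le> \<eta> / 2 * \<bar>d t\<bar>" by (simp add: mult_ac)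
  qed
  also have "\<dots> = \<eta> / 2 * integral {-e..e} (\<lambda>t. \<bar>d t\<bar>)" by simp
  also have "\<dots> \<le> \<eta> / 2 * C" using dC \<eta>0 by (intro mult_left_mono) auto
  finally show ?thesis .
qed

lemma position_estimate:
  "norm (x U - (X + max U 0 *\<^sub>R h)) \<le> 3 * e * B + \<bar>U\<bar> * norm (xd e - h)"
proof -
  have three_terms: "norm (a - b + c) \<le> norm a + norm b + norm c" for a b c :: "real \<times> real"
    using norm_triangle_ineq[of "a - b" c] norm_triangle_ineq4[of a b] by linarith
  have nonneg: "0 \<le> 3 * e * B + \<bar>U\<bar> * norm (xd e - h)" using epos B_nonneg by simp
  consider "U \<le> -e" | "-e < U" "U \<le> 0" | "0 < U" "U < e" | "e \<le> U" by linarith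
  then show ?thesis
  proof cases
    case 1 thus ?thesis using x_left[OF 1] epos nonneg by simp
  next
    case 2
    have "0 \<le> e * B + \<bar>U\<bar> * norm (xd e - h)" using epos B_nonneg by simp
    thus ?thesis using x_displacement[of U] 2 by simp
  next
    case 3
    have "norm (x U - (X + max U 0 *\<^sub>R h)) = norm ((x U - X) - U *\<^sub>R xd e + U *\<^sub>R (xd e - h))"
      using 3 by (simp add: algebra_simps)
    also have "\<dots> \<le> norm (x U - X) + norm (U *\<^sub>R xd e) + norm (U *\<^sub>R (xd e - h))"
      by (rule three_terms)
    also have "\<dots> \<le> 2 * e * B + e * B + \<bar>U\<bar> * norm (xd e - h)"
      using x_displacement[of U] 3 mult_mono[OF _ xd_bound[of e], of U e] B_nonneg
      by (intro add_mono) auto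
    finally show ?thesis by simp
  next
    case 4
    have "norm (x U - (X + max U 0 *\<^sub>R h)) = norm ((x e - X) - e *\<^sub>R xd e + U *\<^sub>R (xd e - h))"
      unfolding x_right[OF 4] using 4 epos by (simp add: algebra_simps)
    also have "\<dots> \<le> norm (x e - X) + norm (e *\<^sub>R xd e) + norm (U *\<^sub>R (xd e - h))"
      by (rule three_terms)
    also have "\<dots> \<le> 2 * e * B + e * B + \<bar>U\<bar> * norm (xd e - h)"
      using x_displacement[of e] epos mult_left_mono[OF xd_bound[of e], of e]
      by (intro add_mono) auto
    finally show ?thesis by simp
  qed
qed

lemma work_energy: "oint (-e) s (\<lambda>r. (g (x r) \<bullet> xd r) * d r) = (norm (xd s))\<^sup>2"
proof -
  have "((\<lambda>s. xd s \<bullet> xd s) has_real_derivative (g (x r) \<bullet> xd r) * d r) (at r)" for r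
  proof -
    have "((\<lambda>s. xd s \<bullet> xd s) has_vector_derivative
        xd r \<bullet> ((d r / 2) *\<^sub>R g (x r)) + ((d r / 2) *\<^sub>R g (x r)) \<bullet> xd r) (at r)"
      by (rule bounded_bilinear.has_vector_derivative[OF bounded_bilinear_inner xdder xdder])
    thus ?thesis
      by (simp add: has_real_derivative_iff_has_vector_derivative inner_commute[of "xd r"]
          algebra_simps)
  qed
  from oint_ftc[OF this] show ?thesis using xd_left[of "-e"] by (simp add: power2_norm_eq_inner)
qed

lemma energy_defect:
  "\<bar>(norm (xd e))\<^sup>2 - (norm h)\<^sup>2\<bar> \<le> norm (xd e - h) * (2 * B + norm (xd e - h))"
proof -
  have "(norm (xd e))\<^sup>2 - (norm h)\<^sup>2 = (norm (xd e) - norm h) * (norm (xd e) + norm h)"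
    by (simp add: power2_eq_square algebra_simps)
  hence "\<bar>(norm (xd e))\<^sup>2 - (norm h)\<^sup>2\<bar> = \<bar>norm (xd e) - norm h\<bar> * (norm (xd e) + norm h)"
    by (simp add: abs_mult)
  also have "\<dots> \<le> norm (xd e - h) * (2 * B + norm (xd e - h))"
    using xd_bound[of e] norm_triangle_ineq3[of "xd e" h] norm_triangle_ineq4[of "xd e" "xd e - h"]
    by (intro mult_mono) auto
  finally show ?thesis .
qed

text \<open>Work estimate against the limit |h|^2 U_+, for any candidate velocity h: by the
  work-energy identity the work is the primitive of a ramp-like function of the speed.\<close>
lemma work_estimate:
  "\<bar>kick_work x xd d g e U - (norm h)\<^sup>2 * max U 0\<bar>
     \<le> 3 * e * B\<^sup>2 + \<bar>U\<bar> * (norm (xd e - h) * (2 * B + norm (xd e - h)))"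
proof -
  let ?Q = "\<lambda>s. (norm (xd s))\<^sup>2"
  have speed_bound: "\<bar>?Q s\<bar> \<le> B\<^sup>2" for s using xd_bound[of s] by (simp add: power_mono)
  have ramp: "\<bar>oint (-e) U ?Q - ?Q e * max U 0\<bar> \<le> 2 * e * B\<^sup>2 + e * \<bar>?Q e\<bar>"
  proof (rule oint_ramp_estimate[OF _ epos _ _ speed_bound])
    show "continuous_on UNIV ?Q" by (intro continuous_intros xd_continuous)
    show "?Q s = 0" if "s \<le> -e" for s using xd_left[OF that] by simp
    show "?Q s = ?Q e" if "e \<le> s" for s by (simp only: xd_right[OF that])
  qed
  have "e * \<bar>?Q e\<bar> \<le> e * B\<^sup>2" using speed_bound[of e] epos by (intro mult_left_mono) auto
  moreover have "\<bar>?Q e * max U 0 - (norm h)\<^sup>2 * max U 0\<bar>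
      \<le> \<bar>U\<bar> * (norm (xd e - h) * (2 * B + norm (xd e - h)))"
  proof -
    have "\<bar>?Q e * max U 0 - (norm h)\<^sup>2 * max U 0\<bar> = \<bar>?Q e - (norm h)\<^sup>2\<bar> * max U 0"
      by (simp add: abs_mult flip: left_diff_distrib)
    also have "\<dots> \<le> norm (xd e - h) * (2 * B + norm (xd e - h)) * \<bar>U\<bar>"
      using energy_defect B_nonneg by (intro mult_mono) auto
    finally show ?thesis by (simp add: mult_ac)
  qed
  ultimately show ?thesis
    using ramp unfolding kick_work_def work_energy by arith
qed

lemma kick_error_bound:
  assumes modulus: "\<And>y. dist y X \<le> e * M * C \<Longrightarrow> norm (g y - g X) \<le> D / (C + 1)"
    and mass: "\<bar>integral {-e..e} d - 1\<bar> \<le> D / (M + 1)" and D: "0 \<le> D" "D \<le> 1"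
  shows "kick_error x xd d g X e U \<le> 3 * e * (B + B\<^sup>2) + \<bar>U\<bar> * (2 * B + 2) * D"
proof -
  define I where "I = integral {-e..e} d"
  define h where "h = (1/2) *\<^sub>R g X"
  have "norm (xd e - (I / 2) *\<^sub>R g X) \<le> D / (C + 1) / 2 * C"
    unfolding I_def by (rule velocity_after_kick) (use modulus in \<open>simp add: B_def mult_ac\<close>)
  also have "\<dots> \<le> D / 2" using D C_nonneg by (simp add: field_simps)
  finally have kick_defect: "norm (xd e - (I / 2) *\<^sub>R g X) \<le> D / 2" .
  have "\<bar>I - 1\<bar> * norm (g X) \<le> D / (M + 1) * M"
    using mass gM[of X] M_nonneg unfolding I_def by (intro mult_mono) auto
  also have "\<dots> \<le> D" using D M_nonneg by (simp add: field_simps)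
  finally have mass_defect: "norm (((I - 1) / 2) *\<^sub>R g X) \<le> D / 2" by simp
  have "norm (xd e - h) = norm ((xd e - (I / 2) *\<^sub>R g X) + ((I - 1) / 2) *\<^sub>R g X)"
    unfolding h_def by (simp add: algebra_simps diff_divide_distrib)
  also have "\<dots> \<le> D"
    using norm_triangle_ineq[of "xd e - (I / 2) *\<^sub>R g X" "((I - 1) / 2) *\<^sub>R g X"]
      kick_defect mass_defect by linarith
  finally have vel: "norm (xd e - h) \<le> D" .
  have "\<bar>U\<bar> * norm (xd e - h) \<le> \<bar>U\<bar> * D" using vel by (simp add: mult_left_mono)
  moreover have "\<bar>U\<bar> * (norm (xd e - h) * (2 * B + norm (xd e - h))) \<le> \<bar>U\<bar> * (D * (2 * B + 1))"
    using vel D B_nonneg by (intro mult_left_mono mult_mono) auto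
  ultimately show ?thesis
    using position_estimate[of U h] work_estimate[of U h] unfolding kick_error_def h_def
    by (simp add: algebra_simps)
qed

end

section \<open>Uniformity over compact sets of initial points\<close>

lemma compact_unit_thickening:
  fixes K :: "'a::euclidean_space set"
  assumes "compact K"
  shows "compact {y. \<exists>X\<in>K. dist y X \<le> 1}"
proof -
  have "{y. \<exists>X\<in>K. dist y X \<le> 1} = {a + b | a b. a \<in> K \<and> b \<in> cball 0 1}"
  proof safe
    fix y X assume "X \<in> K" "dist y X \<le> 1"
    thus "\<exists>a b. y = a + b \<and> a \<in> K \<and> b \<in> cball 0 1"
      by (intro exI[of _ X] exI[of _ "y - X"]) (simp add: dist_norm norm_minus_commute)
  next
    fix a b assume "a \<in> K" "b \<in> cball (0::'a) 1"
    thus "\<exists>X\<in>K. dist (a + b) X \<le> 1" by (intro bexI[of _ a]) (auto simp: dist_norm)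
  qed
  thus ?thesis using compact_sums[OF assms compact_cball, of 0 1] by (simp add: dist_norm)
qed

lemma bounded_near_compact:
  fixes g :: "'a::euclidean_space \<Rightarrow> 'b::real_normed_vector"
  assumes "continuous_on UNIV g" "compact K"
  obtains M where "0 \<le> M" "\<And>X y. X \<in> K \<Longrightarrow> dist y X \<le> 1 \<Longrightarrow> norm (g y) \<le> M"
proof -
  have "bounded (g ` {y. \<exists>X\<in>K. dist y X \<le> 1})"
    by (intro compact_imp_bounded compact_continuous_image compact_unit_thickening
        continuous_on_subset[OF assms(1)] assms(2)) auto
  then obtain M where "\<forall>z\<in>g ` {y. \<exists>X\<in>K. dist y X \<le> 1}. norm z \<le> M"
    by (auto simp: bounded_iff)
  hence "norm (g y) \<le> max M 0" if "X \<in> K" "dist y X \<le> 1" for X y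
    using that by fastforce
  thus ?thesis using that[of "max M 0"] by simp
qed

lemma uniformly_continuous_near_compact:
  fixes g :: "'a::euclidean_space \<Rightarrow> 'b::real_normed_vector"
  assumes "continuous_on UNIV g" "compact K" "0 < \<eta>"
  obtains r where "0 < r"
    "\<And>X y. X \<in> K \<Longrightarrow> dist y X \<le> 1 \<Longrightarrow> dist y X < r \<Longrightarrow> norm (g y - g X) \<le> \<eta>"
proof -
  let ?N = "{y. \<exists>X\<in>K. dist y X \<le> 1}"
  have "uniformly_continuous_on ?N g"
    by (intro compact_uniformly_continuous continuous_on_subset[OF assms(1)]
        compact_unit_thickening assms(2)) auto
  then obtain r where r: "0 < r" "\<forall>X\<in>?N. \<forall>y\<in>?N. dist y X < r \<longrightarrow> dist (g y) (g X) < \<eta>"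
    using assms(3) unfolding uniformly_continuous_on_def by blast
  show ?thesis
  proof (rule that[OF r(1)])
    fix X y assume "X \<in> K" "dist y X \<le> 1" "dist y X < r"
    moreover have "X \<in> ?N" using \<open>X \<in> K\<close> by force
    ultimately have "dist (g y) (g X) < \<eta>" using r(2) by blast
    thus "norm (g y - g X) \<le> \<eta>" by (simp add: dist_norm)
  qed
qed

lemma strict_delta_net_regular:
  assumes "strict_delta_net \<delta>" "0 < \<epsilon>" "\<epsilon> \<le> 1"
  shows "continuous_on UNIV (\<delta> \<epsilon>)" and "\<And>u. \<delta> \<epsilon> u \<noteq> 0 \<Longrightarrow> u \<in> {-\<epsilon>..\<epsilon>}"
proof -
  have "smooth (\<delta> \<epsilon>) \<and> (\<forall>u. \<delta> \<epsilon> u \<noteq> 0 \<longrightarrow> u \<in> {-\<epsilon>..\<epsilon>})"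
    using assms unfolding strict_delta_net_def by auto
  thus "continuous_on UNIV (\<delta> \<epsilon>)" "\<And>u. \<delta> \<epsilon> u \<noteq> 0 \<Longrightarrow> u \<in> {-\<epsilon>..\<epsilon>}"
    using smooth_imp_continuous by auto
qed

lemma mult_less_of_less_divide:
  fixes a t c :: real
  assumes "0 \<le> a" "0 \<le> t" "t < c / (a + 1)"
  shows "t * a < c"
proof -
  have "t * a \<le> t * (a + 1)" using assms by (intro mult_left_mono) auto
  also have "\<dots> < c" using assms by (simp add: pos_less_divide_eq)
  finally show ?thesis .
qed

lemma kick_error_small_eps:
  assumes gcont: "continuous_on UNIV g" and delta: "strict_delta_net \<delta>"
    and M: "\<And>X y. X \<in> K \<Longrightarrow> dist y X \<le> 1 \<Longrightarrow> norm (g y) \<le> M"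
    and r: "\<And>X y. X \<in> K \<Longrightarrow> dist y X \<le> 1 \<Longrightarrow> dist y X < r \<Longrightarrow> norm (g y - g X) \<le> D / (C + 1)"
    and \<epsilon>: "0 < \<epsilon>" "\<epsilon> \<le> 1" "\<epsilon> * M * C < 1" "\<epsilon> * M * C < r"
    and L1: "integral {-\<epsilon>..\<epsilon>} (\<lambda>u. \<bar>\<delta> \<epsilon> u\<bar>) \<le> C"
    and mass: "\<bar>integral {-\<epsilon>..\<epsilon>} (\<delta> \<epsilon>) - 1\<bar> \<le> D / (M + 1)" and D: "0 \<le> D" "D \<le> 1"
    and X: "X \<in> K" and sol: "kick_solution x xd (\<delta> \<epsilon>) g X"
  shows "kick_error x xd (\<delta> \<epsilon>) g X \<epsilon> U
           \<le> 3 * \<epsilon> * (M * C / 2 + (M * C / 2)\<^sup>2) + \<bar>U\<bar> * (M * C + 2) * D"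
proof -
  interpret kick x xd "\<delta> \<epsilon>" g X \<epsilon> M C
    using sol \<epsilon> L1 gcont M[OF X] strict_delta_net_regular[OF delta \<epsilon>(1,2)]
    by unfold_locales auto
  show ?thesis
    using kick_error_bound[of D U] r[OF X] \<epsilon> mass D unfolding B_def by auto
qed

text \<open>Here eps is taken so
  small that the explored radius eps M C is below 1 and below the modulus of continuity of g,
  and that the mass of delta_eps is close to 1.\<close>
lemma kick_error_eventually:
  fixes g :: "real \<times> real \<Rightarrow> real \<times> real" and K :: "(real \<times> real) set"
  assumes gcont: "continuous_on UNIV g" and K: "compact K" and delta: "strict_delta_net \<delta>"
    and \<eta>: "0 < \<eta>"
  shows "\<forall>\<^sub>F \<epsilon> in at_right 0. \<forall>X\<in>K. \<forall>x xd. kick_solution x xd (\<delta> \<epsilon>) g X \<longrightarrow>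
           (\<forall>U. kick_error x xd (\<delta> \<epsilon>) g X \<epsilon> U \<le> \<eta> * (1 + \<bar>U\<bar>))"
proof -
  obtain M where M: "0 \<le> M" "\<And>X y. X \<in> K \<Longrightarrow> dist y X \<le> 1 \<Longrightarrow> norm (g y) \<le> M"
    using bounded_near_compact[OF gcont K] by blast
  obtain C where C: "0 < C" and L1_ev: "\<forall>\<^sub>F \<epsilon> in at_right 0. integral {-\<epsilon>..\<epsilon>} (\<lambda>u. \<bar>\<delta> \<epsilon> u\<bar>) \<le> C"
    using delta unfolding strict_delta_net_def by blast
  define B where "B = M * C / 2"
  define D where "D = min 1 (\<eta> / (2 * B + 2))"
  have B: "0 \<le> B" unfolding B_def using M C by simp
  have "(2 * B + 2) * D \<le> (2 * B + 2) * (\<eta> / (2 * B + 2))"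
    using B unfolding D_def by (intro mult_left_mono) auto
  hence D: "0 < D" "D \<le> 1" "(2 * B + 2) * D \<le> \<eta>" using B \<eta> unfolding D_def by auto
  obtain r where r: "0 < r"
    "\<And>X y. X \<in> K \<Longrightarrow> dist y X \<le> 1 \<Longrightarrow> dist y X < r \<Longrightarrow> norm (g y - g X) \<le> D / (C + 1)"
    using uniformly_continuous_near_compact[OF gcont K, of "D / (C + 1)"] D C by auto
  define \<epsilon>0 where "\<epsilon>0 = min 1 (min (1 / (M * C + 1)) (min (r / (M * C + 1)) (\<eta> / (3 * (B + B\<^sup>2) + 1))))"
  have "0 < \<epsilon>0" unfolding \<epsilon>0_def using M C r \<eta> B by (simp add: add_nonneg_pos)
  hence small_ev: "\<forall>\<^sub>F \<epsilon> in at_right 0. 0 < \<epsilon> \<and> \<epsilon> < \<epsilon>0"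
    unfolding eventually_at_right_field by (intro exI[of _ \<epsilon>0]) auto
  have "((\<lambda>\<epsilon>. integral {-\<epsilon>..\<epsilon>} (\<delta> \<epsilon>)) \<longlongrightarrow> 1) (at_right 0)"
    using delta unfolding strict_delta_net_def by blast
  from tendstoD[OF this, of "D / (M + 1)"]
  have mass_ev: "\<forall>\<^sub>F \<epsilon> in at_right 0. \<bar>integral {-\<epsilon>..\<epsilon>} (\<delta> \<epsilon>) - 1\<bar> \<le> D / (M + 1)"
    using D M by (auto simp: dist_real_def elim: eventually_mono)
  from small_ev mass_ev L1_ev show ?thesis
  proof (eventually_elim, intro ballI allI impI)
    fix \<epsilon> X x xd U
    assume \<epsilon>: "0 < \<epsilon> \<and> \<epsilon> < \<epsilon>0" and mass: "\<bar>integral {-\<epsilon>..\<epsilon>} (\<delta> \<epsilon>) - 1\<bar> \<le> D / (M + 1)"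
      and L1: "integral {-\<epsilon>..\<epsilon>} (\<lambda>u. \<bar>\<delta> \<epsilon> u\<bar>) \<le> C"
      and X: "X \<in> K" and sol: "kick_solution x xd (\<delta> \<epsilon>) g X"
    have "\<epsilon> * (M * C) < 1" "\<epsilon> * (M * C) < r" "\<epsilon> * (3 * (B + B\<^sup>2)) < \<eta>"
      using \<epsilon> M C B by (auto intro!: mult_less_of_less_divide simp: \<epsilon>0_def)
    hence "kick_error x xd (\<delta> \<epsilon>) g X \<epsilon> U \<le> 3 * \<epsilon> * (B + B\<^sup>2) + \<bar>U\<bar> * (2 * B + 2) * D"
      using kick_error_small_eps[OF gcont delta M(2) r(2) _ _ _ _ L1 mass _ D(2) X sol] \<epsilon> D(1)
      unfolding B_def \<epsilon>0_def by (simp add: mult_ac)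
    also have "\<dots> \<le> \<eta> * (1 + \<bar>U\<bar>)"
      using \<open>\<epsilon> * (3 * (B + B\<^sup>2)) < \<eta>\<close> mult_left_mono[OF D(3), of "\<bar>U\<bar>"]
      by (simp add: algebra_simps)
    finally show "kick_error x xd (\<delta> \<epsilon>) g X \<epsilon> U \<le> \<eta> * (1 + \<bar>U\<bar>)" .
  qed
qed

section \<open>Convergence of s_eps to s\<close>

definition kick_solvable :: "(real \<times> real \<Rightarrow> real) \<Rightarrow> (real \<Rightarrow> real \<Rightarrow> real)
    \<Rightarrow> (real \<Rightarrow> real \<times> real \<Rightarrow> real \<Rightarrow> real \<times> real) \<Rightarrow> bool" where
  "kick_solvable f \<delta> x \<longleftrightarrow> (\<forall>K. compact K \<longrightarrow> (\<exists>\<epsilon>K>0. \<forall>X\<in>K. \<forall>\<epsilon>\<in>{0<..1}. \<epsilon> \<le> \<epsilon>K \<longrightarrow>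
      (\<exists>xd. kick_solution (x \<epsilon> X) xd (\<delta> \<epsilon>) (grad f) X)))"

lemma kick_solvable_of_ode:
  assumes "\<forall>K. compact K \<longrightarrow> (\<exists>\<epsilon>K>0. \<forall>X\<in>K. \<forall>\<epsilon>\<in>{0<..1}. \<epsilon> \<le> \<epsilon>K \<longrightarrow>
        (\<exists>xd :: real \<Rightarrow> real \<times> real.
           (\<forall>U. (x \<epsilon> X has_vector_derivative xd U) (at U)) \<and>
           (\<forall>U. (xd has_vector_derivative
                   (1/2 * partial1 f (x \<epsilon> X U) * \<delta> \<epsilon> U,
                    1/2 * partial2 f (x \<epsilon> X U) * \<delta> \<epsilon> U)) (at U)) \<and>
           x \<epsilon> X (-1) = X \<and> xd (-1) = 0))"
  shows "kick_solvable f \<delta> x"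
proof -
  have "(1/2 * partial1 f y * c, 1/2 * partial2 f y * c) = (c / 2) *\<^sub>R grad f y" for y c
    by (simp add: grad_def)
  thus ?thesis using assms unfolding kick_solvable_def kick_solution_def by simp
qed

lemma dist_same_first_le:
  fixes U a1 a2 w b1 b2 v :: real
  shows "dist (U, a1, a2, w) (U, b1, b2, v) \<le> norm ((a1, a2) - (b1, b2)) + \<bar>w - v\<bar>"
proof -
  have "dist (U, a1, a2, w) (U, b1, b2, v) = sqrt (((a1 - b1)\<^sup>2 + (a2 - b2)\<^sup>2) + (w - v)\<^sup>2)"
    by (simp add: dist_Pair_Pair dist_real_def add.assoc)
  also have "\<dots> \<le> sqrt ((a1 - b1)\<^sup>2 + (a2 - b2)\<^sup>2) + sqrt ((w - v)\<^sup>2)"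
    by (rule sqrt_add_le_add_sqrt) auto
  also have "\<dots> = norm ((a1, a2) - (b1, b2)) + \<bar>w - v\<bar>"
    by (simp add: norm_Pair)
  finally show ?thesis .
qed

lemma s_eps_dist_le_kick_error:
  assumes sol: "kick_solution (x \<epsilon> (X1, X2)) xd (\<delta> \<epsilon>) (grad f) (X1, X2)"
  shows "dist (s_eps f \<delta> x \<epsilon> (U, X1, X2, V)) (s_lim f (U, X1, X2, V))
           \<le> kick_error (x \<epsilon> (X1, X2)) xd (\<delta> \<epsilon>) (grad f) (X1, X2) \<epsilon> U"
proof -
  let ?X = "(X1, X2)"
  let ?p = "x \<epsilon> ?X U" and ?q = "?X + max U 0 *\<^sub>R ((1/2) *\<^sub>R grad f ?X)"
  let ?W = "kick_work (x \<epsilon> ?X) xd (\<delta> \<epsilon>) (grad f) \<epsilon> U"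
  have "vector_derivative (x \<epsilon> ?X) (at r) = xd r" for r
    using sol vector_derivative_at unfolding kick_solution_def by blast
  hence "s_eps f \<delta> x \<epsilon> (U, X1, X2, V) = (U, fst ?p, snd ?p, V + ?W)"
    unfolding s_eps_def w_eps_def kick_work_def by (simp add: grad_def inner_prod_def)
  moreover have "s_lim f (U, X1, X2, V)
      = (U, fst ?q, snd ?q, V + (norm ((1/2) *\<^sub>R grad f ?X))\<^sup>2 * max U 0)"
    unfolding s_lim_def grad_def by (simp add: norm_Pair power_divide algebra_simps)
  ultimately have "dist (s_eps f \<delta> x \<epsilon> (U, X1, X2, V)) (s_lim f (U, X1, X2, V))
      \<le> norm (?p - ?q) + \<bar>V + ?W - (V + (norm ((1/2) *\<^sub>R grad f ?X))\<^sup>2 * max U 0)\<bar>"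
    by (metis dist_same_first_le prod.collapse)
  thus ?thesis unfolding kick_error_def by simp
qed

lemma s_eps_error_eventually:
  fixes K :: "(real \<times> real \<times> real \<times> real) set"
  assumes gcont: "continuous_on UNIV (grad f)" and delta: "strict_delta_net \<delta>"
    and solvable: "kick_solvable f \<delta> x" and K: "compact K" and \<eta>: "0 < \<eta>"
  shows "\<forall>\<^sub>F \<epsilon> in at_right 0. \<forall>p\<in>K. dist (s_eps f \<delta> x \<epsilon> p) (s_lim f p) \<le> \<eta> * (1 + \<bar>fst p\<bar>)"
proof -
  define K' where "K' = (\<lambda>p. (fst (snd p), fst (snd (snd p)))) ` K"
  have K': "compact K'" unfolding K'_def by (intro compact_continuous_image continuous_intros K)
  obtain \<epsilon>K where "\<epsilon>K > 0" and solutions: "\<forall>X\<in>K'. \<forall>\<epsilon>\<in>{0<..1}. \<epsilon> \<le> \<epsilon>K \<longrightarrow>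
      (\<exists>xd. kick_solution (x \<epsilon> X) xd (\<delta> \<epsilon>) (grad f) X)"
    using solvable K' unfolding kick_solvable_def by blast
  have small_ev: "\<forall>\<^sub>F \<epsilon> in at_right 0. \<epsilon> \<in> {0<..1} \<and> \<epsilon> \<le> \<epsilon>K"
    unfolding eventually_at_right_field using \<open>\<epsilon>K > 0\<close> by (intro exI[of _ "min 1 \<epsilon>K"]) auto
  from kick_error_eventually[OF gcont K' delta \<eta>] small_ev
  show ?thesis
  proof (eventually_elim, intro ballI)
    fix \<epsilon> p assume bound: "\<forall>X\<in>K'. \<forall>x' xd. kick_solution x' xd (\<delta> \<epsilon>) (grad f) X \<longrightarrow>
        (\<forall>U. kick_error x' xd (\<delta> \<epsilon>) (grad f) X \<epsilon> U \<le> \<eta> * (1 + \<bar>U\<bar>))"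
      and \<epsilon>: "\<epsilon> \<in> {0<..1} \<and> \<epsilon> \<le> \<epsilon>K" and "p \<in> K"
    obtain U X1 X2 V where p: "p = (U, X1, X2, V)" by (cases p) auto
    have X: "(X1, X2) \<in> K'" using \<open>p \<in> K\<close> p unfolding K'_def by force
    then obtain xd where sol: "kick_solution (x \<epsilon> (X1, X2)) xd (\<delta> \<epsilon>) (grad f) (X1, X2)"
      using solutions \<epsilon> by blast
    have "dist (s_eps f \<delta> x \<epsilon> p) (s_lim f p)
        \<le> kick_error (x \<epsilon> (X1, X2)) xd (\<delta> \<epsilon>) (grad f) (X1, X2) \<epsilon> U"
      unfolding p by (rule s_eps_dist_le_kick_error[where x = x and \<delta> = \<delta>, OF sol])
    also have "\<dots> \<le> \<eta> * (1 + \<bar>fst p\<bar>)" using bound X sol p by simp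
    finally show "dist (s_eps f \<delta> x \<epsilon> p) (s_lim f p) \<le> \<eta> * (1 + \<bar>fst p\<bar>)" .
  qed
qed

theorem proposition7p3:
  fixes f :: "real \<times> real \<Rightarrow> real"
    and \<delta> :: "real \<Rightarrow> real \<Rightarrow> real"
    and x :: "real \<Rightarrow> real \<times> real \<Rightarrow> real \<Rightarrow> real \<times> real"
  assumes f_smooth: "smooth f"
    and delta: "strict_delta_net \<delta>"
    and x_smooth: "\<forall>\<epsilon>\<in>{0<..1}. smooth (\<lambda>(X, U). x \<epsilon> X U)"
    and x_ode: "\<forall>K. compact K \<longrightarrow> (\<exists>\<epsilon>K>0. \<forall>X\<in>K. \<forall>\<epsilon>\<in>{0<..1}. \<epsilon> \<le> \<epsilon>K \<longrightarrow>
        (\<exists>xd :: real \<Rightarrow> real \<times> real.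
           (\<forall>U. (x \<epsilon> X has_vector_derivative xd U) (at U)) \<and>
           (\<forall>U. (xd has_vector_derivative
                   (1/2 * partial1 f (x \<epsilon> X U) * \<delta> \<epsilon> U,
                    1/2 * partial2 f (x \<epsilon> X U) * \<delta> \<epsilon> U)) (at U)) \<and>
           x \<epsilon> X (-1) = X \<and> xd (-1) = 0))"
  shows "\<forall>K. compact K \<longrightarrow> uniform_limit K (s_eps f \<delta> x) (s_lim f) (at_right 0)"
proof (intro allI impI)
  fix K :: "(real \<times> real \<times> real \<times> real) set" assume K: "compact K"
  have "bounded (fst ` K)" by (intro compact_imp_bounded compact_continuous_image continuous_intros K)
  then obtain A where A: "\<forall>p\<in>K. \<bar>fst p\<bar> \<le> A" by (auto simp: bounded_iff)
  show "uniform_limit K (s_eps f \<delta> x) (s_lim f) (at_right 0)"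
    unfolding uniform_limit_iff
  proof (intro allI impI)
    fix e0 :: real assume "0 < e0"
    hence "0 < e0 / (2 * (1 + \<bar>A\<bar>))" by simp
    from s_eps_error_eventually[OF smooth_grad_continuous[OF f_smooth] delta
        kick_solvable_of_ode[OF x_ode] K this]
    show "\<forall>\<^sub>F \<epsilon> in at_right 0. \<forall>p\<in>K. dist (s_eps f \<delta> x \<epsilon> p) (s_lim f p) < e0"
    proof (rule eventually_mono, intro ballI)
      fix \<epsilon> p assume bound: "\<forall>p\<in>K. dist (s_eps f \<delta> x \<epsilon> p) (s_lim f p)
          \<le> e0 / (2 * (1 + \<bar>A\<bar>)) * (1 + \<bar>fst p\<bar>)" and "p \<in> K"
      hence "dist (s_eps f \<delta> x \<epsilon> p) (s_lim f p) \<le> e0 / (2 * (1 + \<bar>A\<bar>)) * (1 + \<bar>fst p\<bar>)"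
        by blast
      also have "\<dots> \<le> e0 / (2 * (1 + \<bar>A\<bar>)) * (1 + \<bar>A\<bar>)"
        using A \<open>p \<in> K\<close> \<open>0 < e0\<close> by (intro mult_left_mono) fastforce+
      also have "\<dots> = e0 / 2"
        using abs_ge_zero[of A] by (simp add: field_simps add_nonneg_eq_0_iff)
      also have "\<dots> < e0" using \<open>0 < e0\<close> by simp
      finally show "dist (s_eps f \<delta> x \<epsilon> p) (s_lim f p) < e0" .
    qed
  qed
qed

end
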